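(* In $NOM$, writing $\phi\vee\psi$ for $\neg(\neg\phi\wedge\neg\psi)$, the following rules are derivable for all finite sequences $\Gamma$ and formulas $\phi,\psi,\chi$: from $\Gamma\vdash\phi$ infer $\Gamma\vdash\phi\vee\psi$; from $\Gamma\vdash\psi$ infer $\Gamma\vdash\phi\vee\psi$; and from the five premises $\Gamma\vdash\phi\vee\psi$, $\Gamma,\phi\vdash\chi$, $\Gamma,\psi\vdash\chi$, $\Gamma,\chi,\phi\vdash\chi$, $\Gamma,\chi,\psi\vdash\chi$ infer $\Gamma\vdash\chi$.
   Context: The propositional deductive system $NOM$: formulas are built from propositional letters using $\wedge$, $\rightarrow$, $\neg$. Sequents are $\phi_1,\ldots,\phi_n\vdash\psi$ ($n\ge0$) with antecedent a finite ordered sequence. With $\Gamma$ a finite possibly empty sequence of formulas and $\phi,\psi,\chi$ formulas, the rules of $NOM$ are: (assumption) $\Gamma,\phi\vdash\phi$; (cut) $\Gamma\vdash\phi$, $\Gamma,\phi\vdash\psi$ $\Rightarrow$ $\Gamma\vdash\psi$; (paste) $\Gamma\vdash\phi$, $\Gamma\vdash\psi$ $\Rightarrow$ $\Gamma,\phi\vdash\psi$; (compatible exchange) $\Gamma,\phi,\psi\vdash\phi$, $\Gamma,\phi,\psi\vdash\chi$, $\Gamma,\psi,\phi\vdash\psi$ $\Rightarrow$ $\Gamma,\psi,\phi\vdash\chi$; ($\wedge$-intro) $\Gamma\vdash\phi$, $\Gamma\vdash\psi$ $\Rightarrow$ $\Gamma\vdash\phi\wedge\psi$; ($\wedge$-elim)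 $\Gamma\vdash\phi\wedge\psi$ $\Rightarrow$ $\Gamma\vdash\phi$ and $\Rightarrow$ $\Gamma\vdash\psi$; ($\rightarrow$-intro) $\Gamma,\phi\vdash\psi$ $\Rightarrow$ $\Gamma\vdash\phi\rightarrow\psi$; ($\rightarrow$-elim) $\Gamma\vdash\phi\rightarrow\psi$ $\Rightarrow$ $\Gamma,\phi\vdash\psi$; (excluded middle) $\Gamma,\phi\vdash\psi$, $\Gamma,\neg\phi\vdash\psi$ $\Rightarrow$ $\Gamma\vdash\psi$; (explosion) $\Gamma\vdash\neg\phi$ $\Rightarrow$ $\Gamma,\phi\vdash\psi$. A rule schema is derivable if in every instance its conclusion can be derived from its premises using these rules. *)

theory Defs
  imports Main
begin

datatype 'a form = Atom 'a | Conj "'a form" "'a form" | Imp "'a form" "'a form" | Neg "'a form"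

type_synonym 'a sequent = "'a form list \<times> 'a form"

text \<open>Antecedents are lists; "Gamma, phi" is written Gamma @ [phi].
  derivFrom H s: sequent s is derivable in NOM using the sequents in H as extra premises.\<close>

inductive derivFrom :: "'a sequent set \<Rightarrow> 'a sequent \<Rightarrow> bool" for H where
  hyp: "s \<in> H \<Longrightarrow> derivFrom H s"
| assumption: "derivFrom H (G @ [p], p)"
| cut: "derivFrom H (G, p) \<Longrightarrow> derivFrom H (G @ [p], q) \<Longrightarrow> derivFrom H (G, q)"
| paste: "derivFrom H (G, p) \<Longrightarrow> derivFrom H (G, q) \<Longrightarrow> derivFrom H (G @ [p], q)"
| compat_exchange: "derivFrom H (G @ [p, q], p) \<Longrightarrow> derivFrom H (G @ [p, q], r)
     \<Longrightarrow> derivFrom H (G @ [q, p], q) \<Longrightarrow> derivFrom H (G @ [q, p], r)"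
| conjI: "derivFrom H (G, p) \<Longrightarrow> derivFrom H (G, q) \<Longrightarrow> derivFrom H (G, Conj p q)"
| conjE1: "derivFrom H (G, Conj p q) \<Longrightarrow> derivFrom H (G, p)"
| conjE2: "derivFrom H (G, Conj p q) \<Longrightarrow> derivFrom H (G, q)"
| impI: "derivFrom H (G @ [p], q) \<Longrightarrow> derivFrom H (G, Imp p q)"
| impE: "derivFrom H (G, Imp p q) \<Longrightarrow> derivFrom H (G @ [p], q)"
| excluded_middle: "derivFrom H (G @ [p], q) \<Longrightarrow> derivFrom H (G @ [Neg p], q) \<Longrightarrow> derivFrom H (G, q)"
| explosion: "derivFrom H (G, Neg p) \<Longrightarrow> derivFrom H (G @ [p], q)"

definition derivable_rule :: "'a sequent list \<Rightarrow> 'a sequent \<Rightarrow> bool" where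
  "derivable_rule prems concl \<longleftrightarrow> derivFrom (set prems) concl"

definition Disj :: "'a form \<Rightarrow> 'a form \<Rightarrow> 'a form" where
  "Disj p q = Neg (Conj (Neg p) (Neg q))"

end

theory Submission
  imports Defs
begin

(* NOM has neither weakening nor unrestricted exchange: a hypothesis can be added by paste only
   when it is already derivable, and swapped only by compatible exchange. What makes contexts
   manageable is the notion of an inconsistent context, one that derives every formula: it survives
   paste, cut and compatible exchange, and by excluded middle it yields negation introduction and
   proof by contradiction. The key lemma is that a formula h derivable from G and from G,r is also
   derivable from G,~r; it is proved through the auxiliary conjunction h & r, whose negation is
   interderivable with ~r over G. Applied to the implication p --> r it gives contraposition:
   G,p |- r and G,r,p |- r yield G,~r |- ~p. For disjunction elimination, G,~r then derives
   ~p & ~q, which contradicts the premise ~(~p & ~q), so G,~r is inconsistent and G |- r. *)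

definition inconsistent :: "'a sequent set \<Rightarrow> 'a form list \<Rightarrow> bool" where
  "inconsistent H G \<longleftrightarrow> (\<forall>q. derivFrom H (G, q))"

lemma inconsistentI: "(\<And>q. derivFrom H (G, q)) \<Longrightarrow> inconsistent H G"
  by (simp add: inconsistent_def)

lemma inconsistentD: "inconsistent H G \<Longrightarrow> derivFrom H (G, q)"
  by (simp add: inconsistent_def)

lemma inconsistent_snoc_if_refuted: "derivFrom H (G, Neg p) \<Longrightarrow> inconsistent H (G @ [p])"
  by (rule inconsistentI) (rule derivFrom.explosion)

lemma inconsistent_snoc:
  assumes "inconsistent H G"
  shows "inconsistent H (G @ [p])"
  by (rule inconsistentI, rule derivFrom.paste; rule inconsistentD[OF assms])

lemma inconsistent_cut:
  assumes "derivFrom H (G, p)" and "inconsistent H (G @ [p])"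
  shows "inconsistent H G"
  by (rule inconsistentI, rule derivFrom.cut[OF assms(1) inconsistentD[OF assms(2)]])

lemma inconsistent_swap:
  assumes "inconsistent H (G @ [p, q])" and "derivFrom H (G @ [q, p], q)"
  shows "inconsistent H (G @ [q, p])"
  by (rule inconsistentI,
      rule derivFrom.compat_exchange[OF inconsistentD[OF assms(1)] inconsistentD[OF assms(1)] assms(2)])

lemma derivFrom_NegI: "inconsistent H (G @ [p]) \<Longrightarrow> derivFrom H (G, Neg p)"
  by (rule derivFrom.excluded_middle[OF inconsistentD derivFrom.assumption])

lemma derivFrom_ccontr: "inconsistent H (G @ [Neg p]) \<Longrightarrow> derivFrom H (G, p)"
  by (rule derivFrom.excluded_middle[OF derivFrom.assumption inconsistentD])

(* Excluded middle splits on a new last hypothesis, so p is first moved behind the turnstile. *)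
lemma derivFrom_NegNeg_last: "derivFrom H (G @ [p], Neg (Neg p))"
proof -
  have "derivFrom H ((G @ [Neg p]) @ [p], Neg (Neg p))"
    by (rule derivFrom.explosion) (rule derivFrom.assumption)
  then have from_Neg: "derivFrom H (G @ [Neg p], Imp p (Neg (Neg p)))"
    by (rule derivFrom.impI)
  have "derivFrom H ((G @ [Neg (Neg p)]) @ [Neg p], p)"
    by (rule derivFrom.explosion) (rule derivFrom.assumption)
  with derivFrom.assumption have "derivFrom H (G @ [Neg (Neg p)], p)"
    by (rule derivFrom.excluded_middle)
  then have "derivFrom H ((G @ [Neg (Neg p)]) @ [p], Neg (Neg p))"
    using derivFrom.assumption by (rule derivFrom.paste)
  then have from_NegNeg: "derivFrom H (G @ [Neg (Neg p)], Imp p (Neg (Neg p)))"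
    by (rule derivFrom.impI)
  from from_Neg from_NegNeg have "derivFrom H (G, Imp p (Neg (Neg p)))"
    by (rule derivFrom.excluded_middle)
  then show ?thesis by (rule derivFrom.impE)
qed

lemma derivFrom_NegNegI: "derivFrom H (G, p) \<Longrightarrow> derivFrom H (G, Neg (Neg p))"
  by (rule derivFrom.cut[OF _ derivFrom_NegNeg_last])

lemma inconsistent_snoc_Neg_if_derives: "derivFrom H (G, p) \<Longrightarrow> inconsistent H (G @ [Neg p])"
  by (rule inconsistent_snoc_if_refuted, rule derivFrom_NegNegI)

lemma inconsistent_snoc_if_derives_refuted:
  assumes refuted: "derivFrom H (G, Neg p)" and derives: "derivFrom H (G @ [q], p)"
  shows "inconsistent H (G @ [q])"
proof -
  have "inconsistent H (G @ [p, q])"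
    using inconsistent_snoc[OF inconsistent_snoc_if_refuted[OF refuted]] by simp
  moreover have "derivFrom H (G @ [q, p], q)"
    using derivFrom.paste[OF derives derivFrom.assumption] by simp
  ultimately have "inconsistent H ((G @ [q]) @ [p])"
    by (simp add: inconsistent_swap)
  with derives show ?thesis by (rule inconsistent_cut)
qed

lemma derivFrom_Neg_ConjI1: "derivFrom H (G, Neg p) \<Longrightarrow> derivFrom H (G, Neg (Conj p q))"
  by (rule derivFrom_NegI, erule inconsistent_snoc_if_derives_refuted,
      rule derivFrom.conjE1, rule derivFrom.assumption)

lemma derivFrom_Neg_ConjI2: "derivFrom H (G, Neg q) \<Longrightarrow> derivFrom H (G, Neg (Conj p q))"
  by (rule derivFrom_NegI, erule inconsistent_snoc_if_derives_refuted,
      rule derivFrom.conjE2, rule derivFrom.assumption)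

lemma derivFrom_replace_last:
  assumes pq: "derivFrom H (G @ [p], q)" and qp: "derivFrom H (G @ [q], p)"
    and qr: "derivFrom H (G @ [q], r)"
  shows "derivFrom H (G @ [p], r)"
proof -
  have "derivFrom H (G @ [q, p], q)"
    using derivFrom.paste[OF qp derivFrom.assumption] by simp
  moreover have "derivFrom H (G @ [q, p], r)"
    using derivFrom.paste[OF qp qr] by simp
  moreover have "derivFrom H (G @ [p, q], p)"
    using derivFrom.paste[OF pq derivFrom.assumption] by simp
  ultimately have "derivFrom H ((G @ [p]) @ [q], r)"
    using derivFrom.compat_exchange by simp
  with pq show ?thesis by (rule derivFrom.cut)
qed

lemma derivFrom_Neg_weaken:
  assumes "derivFrom H (G, Neg p)" and "derivFrom H (G @ [q, p], q)"
  shows "derivFrom H (G @ [q], Neg p)"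
proof -
  have "inconsistent H (G @ [p, q])"
    using inconsistent_snoc[OF inconsistent_snoc_if_refuted[OF assms(1)]] by simp
  with assms(2) have "inconsistent H ((G @ [q]) @ [p])"
    by (simp add: inconsistent_swap)
  then show ?thesis by (rule derivFrom_NegI)
qed

lemma derivFrom_snoc_Neg:
  assumes h: "derivFrom H (G, h)" and rh: "derivFrom H (G @ [r], h)"
  shows "derivFrom H (G @ [Neg r], h)"
proof -
  let ?s = "Conj h r"
  have "derivFrom H (G @ [r], ?s)"
    using rh derivFrom.assumption by (rule derivFrom.conjI)
  then have "inconsistent H (G @ [r, Neg ?s])"
    using inconsistent_snoc_Neg_if_derives[of H "G @ [r]"] by simp
  moreover have "derivFrom H ((G @ [Neg ?s]) @ [r], Neg ?s)"
  proof (rule derivFrom_Neg_weaken)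
    show "derivFrom H (G @ [Neg ?s], Neg ?s)" by (rule derivFrom.assumption)
    show "derivFrom H ((G @ [Neg ?s]) @ [r, ?s], r)"
      using derivFrom.conjE2[OF derivFrom.assumption[of H "G @ [Neg ?s, r]" ?s]] by simp
  qed
  ultimately have "inconsistent H ((G @ [Neg ?s]) @ [r])"
    by (simp add: inconsistent_swap)
  then have Neg_s_Neg_r: "derivFrom H (G @ [Neg ?s], Neg r)"
    by (rule derivFrom_NegI)
  have "inconsistent H (G @ [Neg h, Neg ?s])"
    using inconsistent_snoc[OF inconsistent_snoc_Neg_if_derives[OF h]] by simp
  moreover have "derivFrom H ((G @ [Neg ?s]) @ [Neg h], Neg ?s)"
    by (rule derivFrom_Neg_ConjI1, rule derivFrom.assumption)
  ultimately have "inconsistent H ((G @ [Neg ?s]) @ [Neg h])"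
    by (simp add: inconsistent_swap)
  then have Neg_s_h: "derivFrom H (G @ [Neg ?s], h)"
    by (rule derivFrom_ccontr)
  have "derivFrom H (G @ [Neg r], Neg ?s)"
    by (rule derivFrom_Neg_ConjI2, rule derivFrom.assumption)
  from this Neg_s_Neg_r Neg_s_h show ?thesis
    by (rule derivFrom_replace_last)
qed

lemma derivFrom_contrapos:
  assumes pr: "derivFrom H (G @ [p], r)" and rpr: "derivFrom H (G @ [r, p], r)"
  shows "derivFrom H (G @ [Neg r], Neg p)"
proof -
  have "derivFrom H (G, Imp p r)" using pr by (rule derivFrom.impI)
  moreover have "derivFrom H (G @ [r], Imp p r)" using rpr by (intro derivFrom.impI) simp
  ultimately have "derivFrom H (G @ [Neg r], Imp p r)" by (rule derivFrom_snoc_Neg)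
  then have "derivFrom H ((G @ [Neg r]) @ [p], r)" by (rule derivFrom.impE)
  then have "inconsistent H ((G @ [Neg r]) @ [p])"
    by (rule inconsistent_snoc_if_derives_refuted[OF derivFrom.assumption])
  then show ?thesis by (rule derivFrom_NegI)
qed

lemma derivFrom_DisjI1: "derivFrom H (G, p) \<Longrightarrow> derivFrom H (G, Disj p q)"
  unfolding Disj_def by (rule derivFrom_Neg_ConjI1, rule derivFrom_NegNegI)

lemma derivFrom_DisjI2: "derivFrom H (G, q) \<Longrightarrow> derivFrom H (G, Disj p q)"
  unfolding Disj_def by (rule derivFrom_Neg_ConjI2, rule derivFrom_NegNegI)

lemma derivFrom_DisjE:
  assumes "derivFrom H (G, Disj p q)"
    and "derivFrom H (G @ [p], r)" and "derivFrom H (G @ [q], r)"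
    and "derivFrom H (G @ [r, p], r)" and "derivFrom H (G @ [r, q], r)"
  shows "derivFrom H (G, r)"
proof -
  have "derivFrom H (G @ [Neg r], Conj (Neg p) (Neg q))"
    using derivFrom_contrapos[OF assms(2,4)] derivFrom_contrapos[OF assms(3,5)]
    by (rule derivFrom.conjI)
  with assms(1) have "inconsistent H (G @ [Neg r])"
    unfolding Disj_def by (rule inconsistent_snoc_if_derives_refuted)
  then show ?thesis by (rule derivFrom_ccontr)
qed

theorem corollary4p6:
  fixes G :: "'a form list" and p q r :: "'a form"
  shows "derivable_rule [(G, p)] (G, Disj p q)
       \<and> derivable_rule [(G, q)] (G, Disj p q)
       \<and> derivable_rule [(G, Disj p q), (G @ [p], r), (G @ [q], r), (G @ [r, p], r), (G @ [r, q], r)] (G, r)"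
  unfolding derivable_rule_def
proof (intro HOL.conjI)
  show "derivFrom (set [(G, p)]) (G, Disj p q)"
    by (rule derivFrom_DisjI1, rule derivFrom.hyp) simp
  show "derivFrom (set [(G, q)]) (G, Disj p q)"
    by (rule derivFrom_DisjI2, rule derivFrom.hyp) simp
  show "derivFrom (set [(G, Disj p q), (G @ [p], r), (G @ [q], r), (G @ [r, p], r), (G @ [r, q], r)])
      (G, r)"
    by (rule derivFrom_DisjE[of _ G p q]; rule derivFrom.hyp, simp)
qed

end
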